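(* Let $L\subseteq G_3$ be the subgroup of elements that fix every edge sticker and send every corner cubelet back to its own position. Let $\sigma:S_8\to S_{12}$ be the sign map sending even permutations to the identity and odd permutations to the transposition $(b\,c)$ of the edge positions $b,c$, and let $S=\{(\sigma(p),p):p\in S_8\}\subseteq S_{12}\times S_8$. Then $G_3$ contains a subgroup of the form $L\rtimes Q_S$, where $Q_S\subseteq G_3$ is a subgroup with $Q_S\cap\ker\alpha=1$ and $\alpha(Q_S)=S$, and $\psi$ restricts to an isomorphism from $L\rtimes Q_S$ onto $G_2$. In particular the surjection $\psi:G_3\to G_2$ splits and $G_2$ is isomorphic to a subgroup of $G_3$.
   Context: The $3\times3\times3$ Rubik's cube consists of 8 corner cubelets (3 stickers each), 12 edge cubelets (2 stickers each) and 6 face-center cubelets. Corner positions are numbered 1 = top-front-left, 2 = top-front-right, 3 = top-back-left, 4 = top-back-right, 5 = bottom-front-left, 6 = bottom-front-right, 7 = bottom-back-left, 8 = bottom-back-right; edge positions are labeled $a$ = top-back, $b$ = top-right, $c$ = top-front, $d$ = top-left, $e$ = back-left, $f$ = back-right, $g$ = front-right, $h$ = front-left, $i$ = bottom-back, $j$ = bottom-right, $k$ = bottom-front, $l$ = bottom-left. $G_3$ is the group of permutations of the 48 corner and edge stickers generated by the six moves $u_3,d_3,f_3,b_3,l_3,r_3$, which rotate respectively the top, bottom, front, back, left, right layer of nine cubelets by $90^\circ$ clockwise as seen by an observer outside the cube facing that face. The $2\times2\times2$ cube has 8 corner cubelets (24 stickers) with the same corner numbering, and $G_2$ is the group of permutations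 of its 24 stickers generated by the analogous face quarter-turns $u_2,d_2,f_2,b_2,l_2,r_2$. $\psi:G_3\to G_2$ is the (surjective) homomorphism with $u_3\mapsto u_2$, $d_3\mapsto d_2$, etc. (it records the action on the corner stickers). $\phi:G_2\to S_8$ records the permutation of corner positions, $\beta:G_3\to S_{12}$ records the permutation of the edge positions $\{a,\dots,l\}$, and $\alpha=(\beta,\phi\circ\psi):G_3\to S_{12}\times S_8$. *)

theory Defs
  imports "HOL-Algebra.Algebra" "HOL-Combinatorics.Permutations" "HOL-Combinatorics.Transposition"
begin

text \<open>A cubelet position is a point of {-1,0,1}^3
  (x = right, y = up, z = front). A sticker is a pair (p, n) of a cubelet position p
  and an outward unit axis vector n with p . n = 1 (the face of cubelet p the sticker lies on).\<close>

type_synonym vec = "int \<times> int \<times> int"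
type_synonym sticker = "vec \<times> vec"

fun dotv :: "vec \<Rightarrow> vec \<Rightarrow> int" where
  "dotv (a1,a2,a3) (b1,b2,b3) = a1*b1 + a2*b2 + a3*b3"

fun crossv :: "vec \<Rightarrow> vec \<Rightarrow> vec" where
  "crossv (a1,a2,a3) (b1,b2,b3) = (a2*b3 - a3*b2, a3*b1 - a1*b3, a1*b2 - a2*b1)"

fun scalev :: "int \<Rightarrow> vec \<Rightarrow> vec" where
  "scalev c (b1,b2,b3) = (c*b1, c*b2, c*b3)"

fun subv :: "vec \<Rightarrow> vec \<Rightarrow> vec" where
  "subv (a1,a2,a3) (b1,b2,b3) = (a1-b1, a2-b2, a3-b3)"

text \<open>Rotation by 90 degrees clockwise as seen by an observer outside the cube on the
  side of the unit axis d, looking at the cube (i.e. by -90 degrees about d, right-hand rule):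
  v |-> d (d.v) - d x v.\<close>
definition rot :: "vec \<Rightarrow> vec \<Rightarrow> vec" where
  "rot d v = subv (scalev (dotv d v) d) (crossv d v)"

definition axes :: "vec set" where
  "axes = {(1,0,0), (-1,0,0), (0,1,0), (0,-1,0), (0,0,1), (0,0,-1)}"

definition cube_pos :: "vec set" where
  "cube_pos = {(x,y,z). x \<in> {-1,0,1} \<and> y \<in> {-1,0,1} \<and> z \<in> {-1,0,1}}"

fun nonzeros :: "vec \<Rightarrow> nat" where
  "nonzeros (x,y,z) = (if x \<noteq> 0 then 1 else 0) + (if y \<noteq> 0 then 1 else 0) + (if z \<noteq> 0 then 1 else 0)"

definition corner_pos :: "vec set" where
  "corner_pos = {p \<in> cube_pos. nonzeros p = 3}"

definition edge_pos :: "vec set" where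
  "edge_pos = {p \<in> cube_pos. nonzeros p = 2}"

text \<open>Named positions. Corners: 1 = top-front-left, ..., edges a..l as in the paper.\<close>
definition "edge_b = ((1,1,0) :: vec)"
definition "edge_c = ((0,1,1) :: vec)"

text \<open>The 48 corner and edge stickers of the 3x3x3 cube, and the 24 stickers of the
  2x2x2 cube (modelled, with the same corner numbering, as the corner stickers).\<close>
definition stickers3 :: "sticker set" where
  "stickers3 = {(p,n). p \<in> corner_pos \<union> edge_pos \<and> n \<in> axes \<and> dotv p n = 1}"

definition stickers2 :: "sticker set" where
  "stickers2 = {(p,n). p \<in> corner_pos \<and> n \<in> axes \<and> dotv p n = 1}"

definition face_move :: "sticker set \<Rightarrow> vec \<Rightarrow> sticker \<Rightarrow> sticker" where
  "face_move S d = (\<lambda>s \<in> S. if dotv (fst s) d = 1 then (rot d (fst s), rot d (snd s)) else s)"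

definition "U_ax = ((0,1,0) :: vec)"
definition "D_ax = ((0,-1,0) :: vec)"
definition "F_ax = ((0,0,1) :: vec)"
definition "B_ax = ((0,0,-1) :: vec)"
definition "L_ax = ((-1,0,0) :: vec)"
definition "R_ax = ((1,0,0) :: vec)"

definition moves :: "sticker set \<Rightarrow> (sticker \<Rightarrow> sticker) set" where
  "moves S = face_move S ` {U_ax, D_ax, F_ax, B_ax, L_ax, R_ax}"

definition G3 :: "(sticker \<Rightarrow> sticker) monoid" where
  "G3 = subgroup_generated (BijGroup stickers3) (moves stickers3)"

definition G2 :: "(sticker \<Rightarrow> sticker) monoid" where
  "G2 = subgroup_generated (BijGroup stickers2) (moves stickers2)"

definition psi :: "(sticker \<Rightarrow> sticker) \<Rightarrow> (sticker \<Rightarrow> sticker)" where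
  "psi g = (\<lambda>s \<in> stickers2. g s)"

definition pos_perm :: "vec set \<Rightarrow> (sticker \<Rightarrow> sticker) \<Rightarrow> vec \<Rightarrow> vec" where
  "pos_perm P g p = (if p \<in> P then fst (g (p, SOME n. n \<in> axes \<and> dotv p n = 1)) else p)"

definition beta :: "(sticker \<Rightarrow> sticker) \<Rightarrow> vec \<Rightarrow> vec" where
  "beta g = pos_perm edge_pos g"

definition phi :: "(sticker \<Rightarrow> sticker) \<Rightarrow> vec \<Rightarrow> vec" where
  "phi h = pos_perm corner_pos h"

definition alpha :: "(sticker \<Rightarrow> sticker) \<Rightarrow> (vec \<Rightarrow> vec) \<times> (vec \<Rightarrow> vec)" where
  "alpha g = (beta g, phi (psi g))"

definition ker_alpha :: "(sticker \<Rightarrow> sticker) set" where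
  "ker_alpha = {g \<in> carrier G3. alpha g = (id, id)}"

definition sigma :: "(vec \<Rightarrow> vec) \<Rightarrow> (vec \<Rightarrow> vec)" where
  "sigma p = (if evenperm p then id else transpose edge_b edge_c)"

definition S_set :: "((vec \<Rightarrow> vec) \<times> (vec \<Rightarrow> vec)) set" where
  "S_set = {(sigma p, p) | p. p permutes corner_pos}"

definition L_grp :: "(sticker \<Rightarrow> sticker) set" where
  "L_grp = {g \<in> carrier G3. (\<forall>s \<in> stickers3. fst s \<in> edge_pos \<longrightarrow> g s = s)
                         \<and> (\<forall>s \<in> stickers3. fst s \<in> corner_pos \<longrightarrow> fst (g s) = fst s)}"

end

theory Submission
  imports Defs
begin

(* Every element of G3 moves the cubelets rigidly: it commutes with the map twist that cycles the
   stickers of each cubelet.  Hence it permutes cubelets, respecting their type, and an element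
   that fixes every cubelet and preserves orientation (it sends the reference sticker of each
   cubelet, its U/D sticker or, for a middle-layer edge, its F/B sticker, to a reference sticker)
   is the identity.  So the orientation-preserving elements g with alpha g in S form a subgroup Q
   meeting ker alpha and L trivially.  Conjugates of a J-permutation lie in Q and realise every
   transposition (1 p) of corners, whence alpha(Q) = S.  On LQ the map psi is injective: if
   psi (l q) = 1 then alpha q = 1, so q = 1, and l fixes the corner stickers as well as the edge
   stickers.  It is onto G2 because on the corners each face turn agrees with an explicit l q, with
   l a product of conjugates of a two-corner twist and q a product of corner swaps.  The inverse of
   psi on LQ then splits psi. *)

lemma (in group) finite_subgroupI:
  assumes "finite (carrier G)" "H \<subseteq> carrier G" "\<one> \<in> H"
    and "\<And>x y. x \<in> H \<Longrightarrow> y \<in> H \<Longrightarrow> x \<otimes> y \<in> H"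
  shows "subgroup H G"
proof (rule subgroupI)
  fix x assume x: "x \<in> H"
  then have xG: "x \<in> carrier G" using assms(2) by blast
  have pow_in_H: "x [^] n \<in> H" for n :: nat
    by (induction n) (simp_all add: assms(3,4) x)
  have "order G > 0" using assms(1) order_gt_0_iff_finite by blast
  then have "x [^] (order G - 1) \<otimes> x = x [^] order G"
    by (metis Suc_diff_1 nat_pow_Suc)
  also have "\<dots> = \<one>" using pow_order_eq_1[OF xG] .
  finally have "inv x = x [^] (order G - 1)"
    using inv_equality xG nat_pow_closed by blast
  then show "inv x \<in> H" using pow_in_H by simp
qed (use assms in auto)

lemma finite_Bij:
  assumes "finite S"
  shows "finite (Bij S)"
proof (rule finite_subset)
  show "Bij S \<subseteq> S \<rightarrow>\<^sub>E S"
  proof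
    fix f assume "f \<in> Bij S"
    then show "f \<in> S \<rightarrow>\<^sub>E S"
      using Bij_imp_funcset[of f S] Bij_imp_extensional[of f S] unfolding PiE_def by blast
  qed
  show "finite (S \<rightarrow>\<^sub>E S)" using assms by (simp add: finite_PiE)
qed

lemma BijGroup_mult: "x \<in> Bij S \<Longrightarrow> y \<in> Bij S \<Longrightarrow> x \<otimes>\<^bsub>BijGroup S\<^esub> y = compose S x y"
  by (simp add: BijGroup_def)

lemma restrict_hom_BijGroup:
  assumes H: "H \<subseteq> Bij S" and T: "T \<subseteq> S" "finite T"
    and invariant: "\<And>g. g \<in> H \<Longrightarrow> g ` T \<subseteq> T"
  shows "(\<lambda>g. restrict g T) \<in> hom ((BijGroup S)\<lparr>carrier := H\<rparr>) (BijGroup T)"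
proof -
  have restrict_Bij: "restrict g T \<in> Bij T" if "g \<in> H" for g
  proof -
    have "inj_on g T"
      using H T(1) that by (auto simp: Bij_def bij_betw_def intro: inj_on_subset)
    moreover have "g ` T = T"
      using endo_inj_surj[OF T(2) invariant[OF that] calculation] .
    ultimately show ?thesis by (simp add: Bij_def bij_betw_def)
  qed
  show ?thesis
  proof (rule homI)
    fix g assume "g \<in> carrier ((BijGroup S)\<lparr>carrier := H\<rparr>)"
    then show "restrict g T \<in> carrier (BijGroup T)" using restrict_Bij by (simp add: BijGroup_def)
  next
    fix x y
    assume "x \<in> carrier ((BijGroup S)\<lparr>carrier := H\<rparr>)" "y \<in> carrier ((BijGroup S)\<lparr>carrier := H\<rparr>)"
    then have xy: "x \<in> H" "y \<in> H" by simp_all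
    have "restrict (compose S x y) T = compose T (restrict x T) (restrict y T)"
    proof
      fix t
      have "t \<in> T \<Longrightarrow> y t \<in> T" "t \<in> T \<Longrightarrow> t \<in> S" using T(1) invariant[OF xy(2)] by auto
      then show "restrict (compose S x y) T t = compose T (restrict x T) (restrict y T) t"
        by (simp add: compose_def)
    qed
    then show "restrict (x \<otimes>\<^bsub>(BijGroup S)\<lparr>carrier := H\<rparr>\<^esub> y) T =
        restrict x T \<otimes>\<^bsub>BijGroup T\<^esub> restrict y T"
      using xy H restrict_Bij by (simp add: BijGroup_mult subset_iff)
  qed
qed

lemma permutes_in_closure_of_transpositions:
  assumes "finite A" "p permutes A"
    and closed: "id \<in> H" "\<And>f g. f \<in> H \<Longrightarrow> g \<in> H \<Longrightarrow> f \<circ> g \<in> H"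
    and transpositions: "\<And>b. b \<in> A \<Longrightarrow> b \<noteq> a \<Longrightarrow> transpose a b \<in> H"
  shows "p \<in> H"
  using assms(2,1)
proof (induction rule: permutes_induct)
  case (swap x y p)
  have "transpose x y \<in> H"
  proof (cases "x = a \<or> y = a")
    case True
    then show ?thesis using swap(1-3) transpositions transpose_commute by metis
  next
    case False
    then have "transpose x y = transpose a x \<circ> transpose a y \<circ> transpose a x"
      using swap(3) transpose_comp_triple[where a = x and b = a and c = y] transpose_commute[of x a]
      by auto
    then show ?thesis using False swap(1,2) closed(2) transpositions by metis
  qed
  then show ?case using swap.IH closed(2) by blast
qed (use closed in \<open>simp add: id_def\<close>)

section \<open>Cubelets, twists and orientation\<close>

lemma stickers3_iff:
  "s \<in> stickers3 \<longleftrightarrow> fst s \<in> corner_pos \<union> edge_pos \<and> snd s \<in> axes \<and> dotv (fst s) (snd s) = 1"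
  by (cases s) (simp add: stickers3_def)

lemma stickers2_eq: "stickers2 = {s \<in> stickers3. fst s \<in> corner_pos}"
  by (auto simp: stickers2_def stickers3_def)

lemma corner_edge_disjoint: "corner_pos \<inter> edge_pos = {}"
  by (auto simp: corner_pos_def edge_pos_def)

lemma sticker_position: "s \<in> stickers3 \<Longrightarrow> fst s \<in> corner_pos \<longleftrightarrow> fst s \<notin> edge_pos"
  using stickers3_iff by (auto simp: corner_pos_def edge_pos_def)

fun addv :: "vec \<Rightarrow> vec \<Rightarrow> vec" where
  "addv (a1, a2, a3) (b1, b2, b3) = (a1 + b1, a2 + b2, a3 + b3)"

fun halfv :: "vec \<Rightarrow> vec" where
  "halfv (a1, a2, a3) = (a1 div 2, a2 div 2, a3 div 2)"

(* The next sticker (p, n') of the same cubelet.  On a corner, n' is n rotated by 120 degrees about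
   the diagonal p, which for p . n = 1 is (p - n + p \<times> n) / 2; on an edge, n' = p - n is the
   other face. *)
definition twist :: "sticker \<Rightarrow> sticker" where
  "twist s = (case s of (p, n) \<Rightarrow>
     (p, if nonzeros p = 3 then halfv (addv (subv p n) (crossv p n)) else subv p n))"

lemma fst_twist [simp]: "fst (twist s) = fst s"
  by (simp add: twist_def split: prod.split)

(* The usual orientation convention: the reference face of a cubelet is its U or D face, and for
   the four edges of the middle layer its F or B face. *)
definition reference_face :: "vec \<Rightarrow> vec" where
  "reference_face p = (case p of (x, y, z) \<Rightarrow> if y \<noteq> 0 then (0, y, 0) else (0, 0, z))"

definition is_reference :: "sticker \<Rightarrow> bool" where
  "is_reference s \<longleftrightarrow> snd s = reference_face (fst s)"

definition orientation_preserving :: "(sticker \<Rightarrow> sticker) \<Rightarrow> bool" where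
  "orientation_preserving g \<longleftrightarrow> (\<forall>s\<in>stickers3. is_reference (g s) = is_reference s)"

datatype turn = U | D | F | B | L | R

fun turn_axis :: "turn \<Rightarrow> vec" where
  "turn_axis U = U_ax" | "turn_axis D = D_ax" | "turn_axis F = F_ax"
| "turn_axis B = B_ax" | "turn_axis L = L_ax" | "turn_axis R = R_ax"

lemma range_turn_axis: "range turn_axis = {U_ax, D_ax, F_ax, B_ax, L_ax, R_ax}"
proof
  show "range turn_axis \<subseteq> {U_ax, D_ax, F_ax, B_ax, L_ax, R_ax}"
  proof
    fix d assume "d \<in> range turn_axis"
    then obtain t where "d = turn_axis t" by blast
    then show "d \<in> {U_ax, D_ax, F_ax, B_ax, L_ax, R_ax}" by (cases t) simp_all
  qed
  show "{U_ax, D_ax, F_ax, B_ax, L_ax, R_ax} \<subseteq> range turn_axis"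
    using rangeI[of turn_axis U] rangeI[of turn_axis D] rangeI[of turn_axis F]
      rangeI[of turn_axis B] rangeI[of turn_axis L] rangeI[of turn_axis R] by simp
qed

lemma moves_eq_range: "moves S = range (\<lambda>t. face_move S (turn_axis t))"
  unfolding moves_def range_turn_axis[symmetric] image_image ..

lemma face_move_apply:
  "s \<in> S \<Longrightarrow> face_move S d s = (if dotv (fst s) d = 1 then (rot d (fst s), rot d (snd s)) else s)"
  by (simp add: face_move_def)

section \<open>Enumeration of the stickers\<close>

(* The 48 stickers as constants of a datatype, with the face turns as lookup tables: the
   simplifier evaluates these much faster than the integer geometry, which makes it feasible to
   check the long words below sticker by sticker. *)
datatype facelet =
    C0 | C1 | C2 | C3 | C4 | C5 | C6 | C7
  | C8 | C9 | C10 | C11 | C12 | C13 | C14 | C15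
  | C16 | C17 | C18 | C19 | C20 | C21 | C22 | C23
  | C24 | C25 | C26 | C27 | C28 | C29 | C30 | C31
  | C32 | C33 | C34 | C35 | C36 | C37 | C38 | C39
  | C40 | C41 | C42 | C43 | C44 | C45 | C46 | C47

primrec facelet_sticker :: "facelet \<Rightarrow> sticker" where
    "facelet_sticker C0 = ((-1, -1, -1), (-1, 0, 0))"
  | "facelet_sticker C1 = ((-1, -1, -1), (0, -1, 0))"
  | "facelet_sticker C2 = ((-1, -1, -1), (0, 0, -1))"
  | "facelet_sticker C3 = ((-1, -1, 1), (-1, 0, 0))"
  | "facelet_sticker C4 = ((-1, -1, 1), (0, -1, 0))"
  | "facelet_sticker C5 = ((-1, -1, 1), (0, 0, 1))"
  | "facelet_sticker C6 = ((-1, 1, -1), (-1, 0, 0))"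
  | "facelet_sticker C7 = ((-1, 1, -1), (0, 1, 0))"
  | "facelet_sticker C8 = ((-1, 1, -1), (0, 0, -1))"
  | "facelet_sticker C9 = ((-1, 1, 1), (-1, 0, 0))"
  | "facelet_sticker C10 = ((-1, 1, 1), (0, 1, 0))"
  | "facelet_sticker C11 = ((-1, 1, 1), (0, 0, 1))"
  | "facelet_sticker C12 = ((1, -1, -1), (1, 0, 0))"
  | "facelet_sticker C13 = ((1, -1, -1), (0, -1, 0))"
  | "facelet_sticker C14 = ((1, -1, -1), (0, 0, -1))"
  | "facelet_sticker C15 = ((1, -1, 1), (1, 0, 0))"
  | "facelet_sticker C16 = ((1, -1, 1), (0, -1, 0))"
  | "facelet_sticker C17 = ((1, -1, 1), (0, 0, 1))"
  | "facelet_sticker C18 = ((1, 1, -1), (1, 0, 0))"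
  | "facelet_sticker C19 = ((1, 1, -1), (0, 1, 0))"
  | "facelet_sticker C20 = ((1, 1, -1), (0, 0, -1))"
  | "facelet_sticker C21 = ((1, 1, 1), (1, 0, 0))"
  | "facelet_sticker C22 = ((1, 1, 1), (0, 1, 0))"
  | "facelet_sticker C23 = ((1, 1, 1), (0, 0, 1))"
  | "facelet_sticker C24 = ((-1, -1, 0), (-1, 0, 0))"
  | "facelet_sticker C25 = ((-1, -1, 0), (0, -1, 0))"
  | "facelet_sticker C26 = ((-1, 0, -1), (-1, 0, 0))"
  | "facelet_sticker C27 = ((-1, 0, -1), (0, 0, -1))"
  | "facelet_sticker C28 = ((-1, 0, 1), (-1, 0, 0))"
  | "facelet_sticker C29 = ((-1, 0, 1), (0, 0, 1))"
  | "facelet_sticker C30 = ((-1, 1, 0), (-1, 0, 0))"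
  | "facelet_sticker C31 = ((-1, 1, 0), (0, 1, 0))"
  | "facelet_sticker C32 = ((0, -1, -1), (0, -1, 0))"
  | "facelet_sticker C33 = ((0, -1, -1), (0, 0, -1))"
  | "facelet_sticker C34 = ((0, -1, 1), (0, -1, 0))"
  | "facelet_sticker C35 = ((0, -1, 1), (0, 0, 1))"
  | "facelet_sticker C36 = ((0, 1, -1), (0, 1, 0))"
  | "facelet_sticker C37 = ((0, 1, -1), (0, 0, -1))"
  | "facelet_sticker C38 = ((0, 1, 1), (0, 1, 0))"
  | "facelet_sticker C39 = ((0, 1, 1), (0, 0, 1))"
  | "facelet_sticker C40 = ((1, -1, 0), (1, 0, 0))"
  | "facelet_sticker C41 = ((1, -1, 0), (0, -1, 0))"
  | "facelet_sticker C42 = ((1, 0, -1), (1, 0, 0))"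
  | "facelet_sticker C43 = ((1, 0, -1), (0, 0, -1))"
  | "facelet_sticker C44 = ((1, 0, 1), (1, 0, 0))"
  | "facelet_sticker C45 = ((1, 0, 1), (0, 0, 1))"
  | "facelet_sticker C46 = ((1, 1, 0), (1, 0, 0))"
  | "facelet_sticker C47 = ((1, 1, 0), (0, 1, 0))"

definition facelets :: "facelet list" where
  "facelets =
    [C0, C1, C2, C3, C4, C5, C6, C7, C8, C9, C10, C11,
     C12, C13, C14, C15, C16, C17, C18, C19, C20, C21, C22, C23,
     C24, C25, C26, C27, C28, C29, C30, C31, C32, C33, C34, C35,
     C36, C37, C38, C39, C40, C41, C42, C43, C44, C45, C46, C47]"

lemma set_facelets: "set facelets = UNIV"
proof -
  have "c \<in> set facelets" for c by (cases c) (simp_all add: facelets_def)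
  then show ?thesis by blast
qed

lemma facelet_sticker_in_stickers3 [simp]: "facelet_sticker c \<in> stickers3"
  by (cases c) (simp_all add: stickers3_def corner_pos_def edge_pos_def cube_pos_def axes_def)

lemma range_facelet_sticker: "range facelet_sticker = stickers3"
proof
  have enum: "\<forall>x\<in>{-1, 0, 1}. \<forall>y\<in>{-1, 0, 1}. \<forall>z\<in>{-1, 0, 1}. \<forall>n\<in>axes.
     nonzeros (x, y, z) \<in> {2, 3} \<and> dotv (x, y, z) n = 1 \<longrightarrow>
     ((x, y, z), n) \<in> set (map facelet_sticker facelets)"
    by (simp add: axes_def facelets_def)
  show "stickers3 \<subseteq> range facelet_sticker"
  proof
    fix s assume "s \<in> stickers3"
    then obtain x y z n where s: "s = ((x, y, z), n)"
      and xyz: "x \<in> {-1, 0, 1}" "y \<in> {-1, 0, 1}" "z \<in> {-1, 0, 1}"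
      and n: "n \<in> axes" "nonzeros (x, y, z) \<in> {2, 3}" "dotv (x, y, z) n = 1"
      unfolding stickers3_def corner_pos_def edge_pos_def cube_pos_def by blast
    show "s \<in> range facelet_sticker"
      using enum[rule_format, OF xyz n(1)] n(2,3) unfolding s by auto
  qed
qed auto

lemma stickers3_facelet_induct [consumes 1, case_names facelet]:
  "s \<in> stickers3 \<Longrightarrow> (\<And>c. P (facelet_sticker c)) \<Longrightarrow> P s"
  by (metis rangeE range_facelet_sticker)

lemma finite_stickers3: "finite stickers3"
  by (metis finite_imageI finite_set range_facelet_sticker set_facelets)

lemma twist_in_stickers3: "s \<in> stickers3 \<Longrightarrow> twist s \<in> stickers3"
proof (induction rule: stickers3_facelet_induct)
  case (facelet c) show ?case
    by (cases c)
      (simp_all add: twist_def stickers3_def corner_pos_def edge_pos_def cube_pos_def axes_def)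
qed

lemma stickers_of_cubelet:
  assumes "s \<in> stickers3" "n \<in> axes" "dotv (fst s) n = 1"
  shows "n \<in> {snd s, snd (twist s), snd (twist (twist s))}"
proof -
  have "\<forall>n\<in>axes. dotv (fst s) n = 1 \<longrightarrow> n \<in> {snd s, snd (twist s), snd (twist (twist s))}"
    using assms(1)
  proof (induction rule: stickers3_facelet_induct)
    case (facelet c) show ?case
      by (cases c) (simp_all add: twist_def axes_def)
  qed
  then show ?thesis using assms(2,3) by blast
qed

lemma twist_twist_eq_iff: "s \<in> stickers3 \<Longrightarrow> twist (twist s) = s \<longleftrightarrow> fst s \<in> edge_pos"
proof (induction rule: stickers3_facelet_induct)
  case (facelet c) show ?case
    by (cases c) (simp_all add: twist_def edge_pos_def cube_pos_def)
qed

lemma reference_sticker_in_stickers3: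
  assumes "p \<in> corner_pos \<union> edge_pos"
  shows "(p, reference_face p) \<in> stickers3"
proof -
  have enum: "\<forall>x\<in>{-1, 0, 1}. \<forall>y\<in>{-1, 0, 1}. \<forall>z\<in>{-1, 0, 1}.
    nonzeros (x, y, z) \<in> {2, 3} \<longrightarrow>
    ((x, y, z), reference_face (x, y, z)) \<in> set (map facelet_sticker facelets)"
    by (simp add: reference_face_def facelets_def)
  have "p \<in> cube_pos" and "nonzeros p \<in> {2, 3}"
    using assms by (auto simp: corner_pos_def edge_pos_def)
  moreover obtain x y z where p: "p = (x, y, z)" by (cases p)
  ultimately have "(x, y, z) \<in> cube_pos" and nz: "nonzeros (x, y, z) \<in> {2, 3}" by simp_all
  then have xyz: "x \<in> {-1, 0, 1}" "y \<in> {-1, 0, 1}" "z \<in> {-1, 0, 1}"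
    by (simp_all add: cube_pos_def)
  show ?thesis using enum[rule_format, OF xyz nz] range_facelet_sticker unfolding p by auto
qed

lemma same_cubelet_twist:
  assumes "s \<in> stickers3" "t \<in> stickers3" "fst t = fst s"
  shows "t \<in> {s, twist s, twist (twist s)}"
proof -
  have "snd t \<in> axes" "dotv (fst s) (snd t) = 1"
    using assms(2,3) stickers3_iff by auto
  then have "snd t \<in> {snd s, snd (twist s), snd (twist (twist s))}"
    using stickers_of_cubelet[OF assms(1)] by blast
  then show ?thesis using assms(3) by (auto simp: prod_eq_iff)
qed

primrec up_facelet :: "facelet \<Rightarrow> facelet" where
    "up_facelet C0 = C0" | "up_facelet C1 = C1" | "up_facelet C2 = C2"
  | "up_facelet C3 = C3" | "up_facelet C4 = C4" | "up_facelet C5 = C5"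
  | "up_facelet C6 = C20" | "up_facelet C7 = C19" | "up_facelet C8 = C18"
  | "up_facelet C9 = C8" | "up_facelet C10 = C7" | "up_facelet C11 = C6"
  | "up_facelet C12 = C12" | "up_facelet C13 = C13" | "up_facelet C14 = C14"
  | "up_facelet C15 = C15" | "up_facelet C16 = C16" | "up_facelet C17 = C17"
  | "up_facelet C18 = C23" | "up_facelet C19 = C22" | "up_facelet C20 = C21"
  | "up_facelet C21 = C11" | "up_facelet C22 = C10" | "up_facelet C23 = C9"
  | "up_facelet C24 = C24" | "up_facelet C25 = C25" | "up_facelet C26 = C26"
  | "up_facelet C27 = C27" | "up_facelet C28 = C28" | "up_facelet C29 = C29"
  | "up_facelet C30 = C37" | "up_facelet C31 = C36" | "up_facelet C32 = C32"
  | "up_facelet C33 = C33" | "up_facelet C34 = C34" | "up_facelet C35 = C35"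
  | "up_facelet C36 = C47" | "up_facelet C37 = C46" | "up_facelet C38 = C31"
  | "up_facelet C39 = C30" | "up_facelet C40 = C40" | "up_facelet C41 = C41"
  | "up_facelet C42 = C42" | "up_facelet C43 = C43" | "up_facelet C44 = C44"
  | "up_facelet C45 = C45" | "up_facelet C46 = C39" | "up_facelet C47 = C38"

primrec down_facelet :: "facelet \<Rightarrow> facelet" where
    "down_facelet C0 = C5" | "down_facelet C1 = C4" | "down_facelet C2 = C3"
  | "down_facelet C3 = C17" | "down_facelet C4 = C16" | "down_facelet C5 = C15"
  | "down_facelet C6 = C6" | "down_facelet C7 = C7" | "down_facelet C8 = C8"
  | "down_facelet C9 = C9" | "down_facelet C10 = C10" | "down_facelet C11 = C11"
  | "down_facelet C12 = C2" | "down_facelet C13 = C1" | "down_facelet C14 = C0"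
  | "down_facelet C15 = C14" | "down_facelet C16 = C13" | "down_facelet C17 = C12"
  | "down_facelet C18 = C18" | "down_facelet C19 = C19" | "down_facelet C20 = C20"
  | "down_facelet C21 = C21" | "down_facelet C22 = C22" | "down_facelet C23 = C23"
  | "down_facelet C24 = C35" | "down_facelet C25 = C34" | "down_facelet C26 = C26"
  | "down_facelet C27 = C27" | "down_facelet C28 = C28" | "down_facelet C29 = C29"
  | "down_facelet C30 = C30" | "down_facelet C31 = C31" | "down_facelet C32 = C25"
  | "down_facelet C33 = C24" | "down_facelet C34 = C41" | "down_facelet C35 = C40"
  | "down_facelet C36 = C36" | "down_facelet C37 = C37" | "down_facelet C38 = C38"
  | "down_facelet C39 = C39" | "down_facelet C40 = C33" | "down_facelet C41 = C32"
  | "down_facelet C42 = C42" | "down_facelet C43 = C43" | "down_facelet C44 = C44"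
  | "down_facelet C45 = C45" | "down_facelet C46 = C46" | "down_facelet C47 = C47"

primrec front_facelet :: "facelet \<Rightarrow> facelet" where
    "front_facelet C0 = C0" | "front_facelet C1 = C1" | "front_facelet C2 = C2"
  | "front_facelet C3 = C10" | "front_facelet C4 = C9" | "front_facelet C5 = C11"
  | "front_facelet C6 = C6" | "front_facelet C7 = C7" | "front_facelet C8 = C8"
  | "front_facelet C9 = C22" | "front_facelet C10 = C21" | "front_facelet C11 = C23"
  | "front_facelet C12 = C12" | "front_facelet C13 = C13" | "front_facelet C14 = C14"
  | "front_facelet C15 = C4" | "front_facelet C16 = C3" | "front_facelet C17 = C5"
  | "front_facelet C18 = C18" | "front_facelet C19 = C19" | "front_facelet C20 = C20"
  | "front_facelet C21 = C16" | "front_facelet C22 = C15" | "front_facelet C23 = C17"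
  | "front_facelet C24 = C24" | "front_facelet C25 = C25" | "front_facelet C26 = C26"
  | "front_facelet C27 = C27" | "front_facelet C28 = C38" | "front_facelet C29 = C39"
  | "front_facelet C30 = C30" | "front_facelet C31 = C31" | "front_facelet C32 = C32"
  | "front_facelet C33 = C33" | "front_facelet C34 = C28" | "front_facelet C35 = C29"
  | "front_facelet C36 = C36" | "front_facelet C37 = C37" | "front_facelet C38 = C44"
  | "front_facelet C39 = C45" | "front_facelet C40 = C40" | "front_facelet C41 = C41"
  | "front_facelet C42 = C42" | "front_facelet C43 = C43" | "front_facelet C44 = C34"
  | "front_facelet C45 = C35" | "front_facelet C46 = C46" | "front_facelet C47 = C47"

primrec back_facelet :: "facelet \<Rightarrow> facelet" where
    "back_facelet C0 = C13" | "back_facelet C1 = C12" | "back_facelet C2 = C14"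
  | "back_facelet C3 = C3" | "back_facelet C4 = C4" | "back_facelet C5 = C5"
  | "back_facelet C6 = C1" | "back_facelet C7 = C0" | "back_facelet C8 = C2"
  | "back_facelet C9 = C9" | "back_facelet C10 = C10" | "back_facelet C11 = C11"
  | "back_facelet C12 = C19" | "back_facelet C13 = C18" | "back_facelet C14 = C20"
  | "back_facelet C15 = C15" | "back_facelet C16 = C16" | "back_facelet C17 = C17"
  | "back_facelet C18 = C7" | "back_facelet C19 = C6" | "back_facelet C20 = C8"
  | "back_facelet C21 = C21" | "back_facelet C22 = C22" | "back_facelet C23 = C23"
  | "back_facelet C24 = C24" | "back_facelet C25 = C25" | "back_facelet C26 = C32"
  | "back_facelet C27 = C33" | "back_facelet C28 = C28" | "back_facelet C29 = C29"
  | "back_facelet C30 = C30" | "back_facelet C31 = C31" | "back_facelet C32 = C42"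
  | "back_facelet C33 = C43" | "back_facelet C34 = C34" | "back_facelet C35 = C35"
  | "back_facelet C36 = C26" | "back_facelet C37 = C27" | "back_facelet C38 = C38"
  | "back_facelet C39 = C39" | "back_facelet C40 = C40" | "back_facelet C41 = C41"
  | "back_facelet C42 = C36" | "back_facelet C43 = C37" | "back_facelet C44 = C44"
  | "back_facelet C45 = C45" | "back_facelet C46 = C46" | "back_facelet C47 = C47"

primrec left_facelet :: "facelet \<Rightarrow> facelet" where
    "left_facelet C0 = C6" | "left_facelet C1 = C8" | "left_facelet C2 = C7"
  | "left_facelet C3 = C0" | "left_facelet C4 = C2" | "left_facelet C5 = C1"
  | "left_facelet C6 = C9" | "left_facelet C7 = C11" | "left_facelet C8 = C10"
  | "left_facelet C9 = C3" | "left_facelet C10 = C5" | "left_facelet C11 = C4"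
  | "left_facelet C12 = C12" | "left_facelet C13 = C13" | "left_facelet C14 = C14"
  | "left_facelet C15 = C15" | "left_facelet C16 = C16" | "left_facelet C17 = C17"
  | "left_facelet C18 = C18" | "left_facelet C19 = C19" | "left_facelet C20 = C20"
  | "left_facelet C21 = C21" | "left_facelet C22 = C22" | "left_facelet C23 = C23"
  | "left_facelet C24 = C26" | "left_facelet C25 = C27" | "left_facelet C26 = C30"
  | "left_facelet C27 = C31" | "left_facelet C28 = C24" | "left_facelet C29 = C25"
  | "left_facelet C30 = C28" | "left_facelet C31 = C29" | "left_facelet C32 = C32"
  | "left_facelet C33 = C33" | "left_facelet C34 = C34" | "left_facelet C35 = C35"
  | "left_facelet C36 = C36" | "left_facelet C37 = C37" | "left_facelet C38 = C38"
  | "left_facelet C39 = C39" | "left_facelet C40 = C40" | "left_facelet C41 = C41"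
  | "left_facelet C42 = C42" | "left_facelet C43 = C43" | "left_facelet C44 = C44"
  | "left_facelet C45 = C45" | "left_facelet C46 = C46" | "left_facelet C47 = C47"

primrec right_facelet :: "facelet \<Rightarrow> facelet" where
    "right_facelet C0 = C0" | "right_facelet C1 = C1" | "right_facelet C2 = C2"
  | "right_facelet C3 = C3" | "right_facelet C4 = C4" | "right_facelet C5 = C5"
  | "right_facelet C6 = C6" | "right_facelet C7 = C7" | "right_facelet C8 = C8"
  | "right_facelet C9 = C9" | "right_facelet C10 = C10" | "right_facelet C11 = C11"
  | "right_facelet C12 = C15" | "right_facelet C13 = C17" | "right_facelet C14 = C16"
  | "right_facelet C15 = C21" | "right_facelet C16 = C23" | "right_facelet C17 = C22"
  | "right_facelet C18 = C12" | "right_facelet C19 = C14" | "right_facelet C20 = C13"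
  | "right_facelet C21 = C18" | "right_facelet C22 = C20" | "right_facelet C23 = C19"
  | "right_facelet C24 = C24" | "right_facelet C25 = C25" | "right_facelet C26 = C26"
  | "right_facelet C27 = C27" | "right_facelet C28 = C28" | "right_facelet C29 = C29"
  | "right_facelet C30 = C30" | "right_facelet C31 = C31" | "right_facelet C32 = C32"
  | "right_facelet C33 = C33" | "right_facelet C34 = C34" | "right_facelet C35 = C35"
  | "right_facelet C36 = C36" | "right_facelet C37 = C37" | "right_facelet C38 = C38"
  | "right_facelet C39 = C39" | "right_facelet C40 = C44" | "right_facelet C41 = C45"
  | "right_facelet C42 = C40" | "right_facelet C43 = C41" | "right_facelet C44 = C46"
  | "right_facelet C45 = C47" | "right_facelet C46 = C42" | "right_facelet C47 = C43"

fun turn_facelet :: "turn \<Rightarrow> facelet \<Rightarrow> facelet" where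
    "turn_facelet U c = up_facelet c"
  | "turn_facelet D c = down_facelet c"
  | "turn_facelet F c = front_facelet c"
  | "turn_facelet B c = back_facelet c"
  | "turn_facelet L c = left_facelet c"
  | "turn_facelet R c = right_facelet c"

lemmas facelet_table_simps = turn_facelet.simps up_facelet.simps down_facelet.simps
  front_facelet.simps back_facelet.simps left_facelet.simps right_facelet.simps

lemma face_move_facelet_sticker:
  "face_move stickers3 (turn_axis t) (facelet_sticker c) = facelet_sticker (turn_facelet t c)"
  unfolding face_move_apply[OF facelet_sticker_in_stickers3]
  by (cases t; cases c)
    (simp_all add: rot_def U_ax_def D_ax_def F_ax_def B_ax_def L_ax_def R_ax_def)

lemma turn_facelet_order: "turn_facelet t (turn_facelet t (turn_facelet t (turn_facelet t c))) = c"
  by (cases t; cases c) simp_all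

lemma face_move_twist:
  assumes "s \<in> stickers3"
  shows "face_move stickers3 (turn_axis t) (twist s) = twist (face_move stickers3 (turn_axis t) s)"
  using assms
proof (induction rule: stickers3_facelet_induct)
  case (facelet c) show ?case
    unfolding face_move_apply[OF twist_in_stickers3[OF facelet_sticker_in_stickers3]]
      face_move_apply[OF facelet_sticker_in_stickers3]
    by (cases t; cases c)
      (simp_all add: twist_def rot_def U_ax_def D_ax_def F_ax_def B_ax_def L_ax_def R_ax_def)
qed

(* A word [t1, ..., tn] performs tn first and t1 last. *)
primrec word_facelet :: "turn list \<Rightarrow> facelet \<Rightarrow> facelet" where
  "word_facelet [] c = c"
| "word_facelet (t # w) c = turn_facelet t (word_facelet w c)"

definition inverse_word :: "turn list \<Rightarrow> turn list" where
  "inverse_word w = concat (map (\<lambda>t. [t, t, t]) (rev w))"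

definition conjugate_word :: "turn list \<Rightarrow> turn list \<Rightarrow> turn list" where
  "conjugate_word s w = s @ w @ inverse_word s"

(* U' R' U' R2 F R' U' R' U R F' R' U R, a J-permutation: it swaps corners 2 and 4 and edges b
   and c, and preserves orientation. *)
definition j_perm :: "turn list" where
  "j_perm = [U, U, U, R, R, R, U, U, U, R, R, F, R, R, R, U, U, U, R, R, R, U, R, F, F, F, R, R, R,
    U, R]"

(* (D R D' R')^2 U (R D R' D')^2 U': twists two corners and fixes every other sticker. *)
definition corner_twist :: "turn list" where
  "corner_twist = [D, R, D, D, D, R, R, R, D, R, D, D, D, R, R, R, U,
    R, D, R, R, R, D, D, D, R, D, R, R, R, D, D, D, U, U, U]"

definition corner_1 :: vec where
  "corner_1 = (-1, 1, 1)"

(* For each corner p other than corner 1, a word in U, D and half turns carrying the two corners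
   swapped by j_perm to corner 1 and p, and the two edges to b and c. *)
definition swap_setups :: "(vec \<times> turn list) list" where
  "swap_setups =
    [((1, 1, 1), [L, L, B, B]),
     ((1, -1, -1), [R, R, F, F, R, R, F, F]),
     ((-1, 1, -1), [F, F, L, L, U, U, F, F, U]),
     ((1, 1, -1), [L, L, U, B, B, D, D, F, F]),
     ((-1, -1, -1), [D, R, R, F, F, R, R, F, F]),
     ((1, -1, 1), [D, D, D, R, R, F, F, R, R, F, F]),
     ((-1, -1, 1), [D, D, R, R, F, F, R, R, F, F])]"

definition corner_swap_word :: "vec \<Rightarrow> turn list" where
  "corner_swap_word p = conjugate_word (the (map_of swap_setups p)) j_perm"

(* On the corner stickers the turn t acts as the word twist_word t @ swap_word t: the swaps of
   corner 1 with the corners listed in swap_corners t realise the permutation of t, and the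
   conjugates of corner_twist realise its twists. *)
fun twist_setups :: "turn \<Rightarrow> turn list list" where
    "twist_setups U = []"
  | "twist_setups D = []"
  | "twist_setups F = [[F], [U, L]]"
  | "twist_setups B = [[B, U, U], [R, R, F]]"
  | "twist_setups L = [[L, U], [U, B, U]]"
  | "twist_setups R = [[R, F], [F, D, F]]"

fun swap_corners :: "turn \<Rightarrow> vec list" where
    "swap_corners U = [(1, 1, 1), (1, 1, -1), (-1, 1, -1)]"
  | "swap_corners D = [(-1, -1, -1), (1, -1, -1), (1, -1, 1), (-1, -1, 1), (-1, -1, -1)]"
  | "swap_corners F = [(-1, -1, 1), (1, -1, 1), (1, 1, 1)]"
  | "swap_corners B = [(-1, -1, -1), (-1, 1, -1), (1, 1, -1), (1, -1, -1), (-1, -1, -1)]"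
  | "swap_corners L = [(-1, 1, -1), (-1, -1, -1), (-1, -1, 1)]"
  | "swap_corners R = [(1, -1, -1), (1, 1, -1), (1, 1, 1), (1, -1, 1), (1, -1, -1)]"

definition twist_word :: "turn \<Rightarrow> turn list" where
  "twist_word t = concat (map (\<lambda>s. conjugate_word s corner_twist) (twist_setups t))"

definition swap_word :: "turn \<Rightarrow> turn list" where
  "swap_word t = concat (map corner_swap_word (swap_corners t))"

lemma corner_pos_eq: "corner_pos = insert corner_1 (fst ` set swap_setups)"
proof
  have enum: "\<forall>x\<in>{-1, 0, 1}. \<forall>y\<in>{-1, 0, 1}. \<forall>z\<in>{-1, 0, 1}.
    nonzeros (x, y, z) = 3 \<longrightarrow> (x, y, z) \<in> insert corner_1 (fst ` set swap_setups)"
    by (simp add: corner_1_def swap_setups_def)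
  show "corner_pos \<subseteq> insert corner_1 (fst ` set swap_setups)"
  proof
    fix p assume "p \<in> corner_pos"
    obtain x y z where p: "p = (x, y, z)" by (cases p)
    have "(x, y, z) \<in> cube_pos" and nz: "nonzeros (x, y, z) = 3"
      using \<open>p \<in> corner_pos\<close> unfolding p corner_pos_def by simp_all
    then have xyz: "x \<in> {-1, 0, 1}" "y \<in> {-1, 0, 1}" "z \<in> {-1, 0, 1}"
      by (simp_all add: cube_pos_def)
    show "p \<in> insert corner_1 (fst ` set swap_setups)"
      using enum[rule_format, OF xyz nz] unfolding p .
  qed
qed (simp add: corner_1_def swap_setups_def corner_pos_def cube_pos_def)

lemma corner_1_notin_swap_setups: "corner_1 \<notin> fst ` set swap_setups"
  by (simp add: corner_1_def swap_setups_def)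

lemma edge_b_in_edge_pos: "edge_b \<in> edge_pos" and edge_c_in_edge_pos: "edge_c \<in> edge_pos"
  by (simp_all add: edge_b_def edge_c_def edge_pos_def cube_pos_def)

(* The words are first expanded to literal lists; their action on the 48 facelets is then
   computed with the lookup tables alone, which is far faster than with the full simpset. *)
lemma corner_swap_word_facelet:
  assumes "p \<in> fst ` set swap_setups"
  shows "is_reference (facelet_sticker (word_facelet (corner_swap_word p) c)) =
      is_reference (facelet_sticker c) \<and>
    fst (facelet_sticker (word_facelet (corner_swap_word p) c)) =
      transpose corner_1 p (transpose edge_b edge_c (fst (facelet_sticker c)))"
    (is "?P p c")
proof -
  have "\<forall>p\<in>fst ` set swap_setups. \<forall>c\<in>set facelets. ?P p c"
    apply (simp del: word_facelet.simps
        add: swap_setups_def corner_swap_word_def conjugate_word_def inverse_word_def j_perm_def)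
    apply (simp only: facelets_def list.set ball_simps word_facelet.simps facelet_table_simps)
    apply (simp add: is_reference_def reference_face_def corner_1_def edge_b_def edge_c_def
        transpose_def)
    done
  then show ?thesis using assms set_facelets by blast
qed

lemma turn_words_facelet:
  "if nonzeros (fst (facelet_sticker c)) = 3
   then fst (facelet_sticker (word_facelet (twist_word t) c)) = fst (facelet_sticker c) \<and>
     word_facelet (twist_word t @ swap_word t) c = turn_facelet t c
   else word_facelet (twist_word t) c = c"
  (is "?P t c")
proof -
  have "\<forall>t\<in>{U, D, F, B, L, R}. \<forall>c\<in>set facelets. ?P t c"
    apply (simp del: word_facelet.simps turn_facelet.simps
        add: twist_word_def swap_word_def corner_swap_word_def swap_setups_def
        conjugate_word_def inverse_word_def j_perm_def corner_twist_def)
    apply (simp only: facelets_def list.set ball_simps word_facelet.simps facelet_table_simps)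
    apply simp
    done
  then show ?thesis using set_facelets by (cases t) blast+
qed

abbreviation turn_move :: "turn \<Rightarrow> sticker \<Rightarrow> sticker" where
  "turn_move t \<equiv> face_move stickers3 (turn_axis t)"

lemma turn_move_in_stickers3: "s \<in> stickers3 \<Longrightarrow> turn_move t s \<in> stickers3"
  by (induction rule: stickers3_facelet_induct) (simp add: face_move_facelet_sticker)

lemma turn_move_Bij: "turn_move t \<in> Bij stickers3"
proof -
  have order_4: "turn_move t (turn_move t (turn_move t (turn_move t s))) = s"
    if "s \<in> stickers3" for s
    using that by (induction rule: stickers3_facelet_induct)
      (simp add: face_move_facelet_sticker turn_facelet_order)
  have "bij_betw (turn_move t) stickers3 stickers3"
    by (rule bij_betw_byWitness[where f' = "turn_move t \<circ> turn_move t \<circ> turn_move t"])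
      (auto simp: order_4 turn_move_in_stickers3)
  moreover have "turn_move t \<in> extensional stickers3"
    unfolding face_move_def by (rule restrict_extensional)
  ultimately show ?thesis by (simp add: Bij_def)
qed

lemma carrier_G3: "carrier G3 = generate (BijGroup stickers3) (range turn_move)"
  using turn_move_Bij
  by (auto simp: G3_def carrier_subgroup_generated moves_eq_range BijGroup_def
      intro!: arg_cong[where f = "generate _"])

lemma G3_eq_BijGroup_restrict: "G3 = (BijGroup stickers3)\<lparr>carrier := carrier G3\<rparr>"
  by (simp add: G3_def subgroup_generated_def)

interpretation G3: group G3
  by (simp add: G3_def group_BijGroup group.group_subgroup_generated)

lemma subgroup_carrier_G3: "subgroup (carrier G3) (BijGroup stickers3)"
  unfolding G3_def by (rule group.subgroup_subgroup_generated[OF group_BijGroup])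

lemma G3_Bij: "g \<in> carrier G3 \<Longrightarrow> g \<in> Bij stickers3"
  using subgroup.subset[OF subgroup_carrier_G3] by (auto simp: BijGroup_def)

lemma G3_apply_in_stickers3: "g \<in> carrier G3 \<Longrightarrow> s \<in> stickers3 \<Longrightarrow> g s \<in> stickers3"
  using G3_Bij Bij_imp_funcset by blast

lemma G3_mult_apply:
  "x \<in> carrier G3 \<Longrightarrow> y \<in> carrier G3 \<Longrightarrow> s \<in> stickers3 \<Longrightarrow> (x \<otimes>\<^bsub>G3\<^esub> y) s = x (y s)"
  by (simp add: G3_def BijGroup_mult G3_Bij[unfolded G3_def] compose_def)

lemma G3_one_apply: "s \<in> stickers3 \<Longrightarrow> \<one>\<^bsub>G3\<^esub> s = s"
  by (simp add: G3_def BijGroup_def)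

lemma G3_eqI:
  "x \<in> carrier G3 \<Longrightarrow> y \<in> carrier G3 \<Longrightarrow> (\<And>s. s \<in> stickers3 \<Longrightarrow> x s = y s) \<Longrightarrow> x = y"
  using G3_Bij Bij_imp_extensional extensionalityI by metis

lemma G3_inv_apply: "g \<in> carrier G3 \<Longrightarrow> s \<in> stickers3 \<Longrightarrow> g ((inv\<^bsub>G3\<^esub> g) s) = s"
  using G3_mult_apply[of g "inv\<^bsub>G3\<^esub> g" s] G3_one_apply by simp

lemma G3_inj:
  "g \<in> carrier G3 \<Longrightarrow> s \<in> stickers3 \<Longrightarrow> t \<in> stickers3 \<Longrightarrow> g s = g t \<Longrightarrow> s = t"
  using G3_Bij by (auto simp: Bij_def bij_betw_def dest: inj_onD)

lemma turn_move_in_G3: "turn_move t \<in> carrier G3"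
  by (simp add: carrier_G3 generate.incl)

lemma finite_carrier_G3: "finite (carrier G3)"
  by (rule finite_subset[OF _ finite_Bij[OF finite_stickers3]]) (use G3_Bij in blast)

lemma generate_G3: "generate G3 (range turn_move) = carrier G3"
  using group.generate_consistent[OF group_BijGroup _ subgroup_carrier_G3, of "range turn_move"]
    turn_move_in_G3
  by (metis G3_eq_BijGroup_restrict carrier_G3 image_subset_iff)

(* G3 is finite, so a property closed under products needs no case for inverses. *)
lemma G3_induct [consumes 1, case_names one turn mult]:
  assumes "g \<in> carrier G3" "P \<one>\<^bsub>G3\<^esub>" "\<And>t. P (turn_move t)"
    and "\<And>x y. x \<in> carrier G3 \<Longrightarrow> y \<in> carrier G3 \<Longrightarrow> P x \<Longrightarrow> P y \<Longrightarrow> P (x \<otimes>\<^bsub>G3\<^esub> y)"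
  shows "P g"
proof -
  let ?H = "{g \<in> carrier G3. P g}"
  have "subgroup ?H G3"
  proof (rule G3.finite_subgroupI[OF finite_carrier_G3])
    show "?H \<subseteq> carrier G3" by blast
    show "\<one>\<^bsub>G3\<^esub> \<in> ?H" using assms(2) by simp
    show "x \<otimes>\<^bsub>G3\<^esub> y \<in> ?H" if "x \<in> ?H" "y \<in> ?H" for x y using that assms(4) by simp
  qed
  moreover have "range turn_move \<subseteq> ?H" using assms(3) turn_move_in_G3 by blast
  ultimately have "generate G3 (range turn_move) \<subseteq> ?H" by (intro G3.generate_subgroup_incl)
  then show ?thesis using assms(1) generate_G3 by blast
qed

primrec word_perm :: "turn list \<Rightarrow> sticker \<Rightarrow> sticker" where
  "word_perm [] = \<one>\<^bsub>G3\<^esub>"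
| "word_perm (t # w) = turn_move t \<otimes>\<^bsub>G3\<^esub> word_perm w"

lemma word_perm_in_G3: "word_perm w \<in> carrier G3"
  by (induction w) (simp_all add: turn_move_in_G3)

lemma word_perm_append: "word_perm (u @ v) = word_perm u \<otimes>\<^bsub>G3\<^esub> word_perm v"
  by (induction u) (simp_all add: word_perm_in_G3 turn_move_in_G3 G3.m_assoc)

lemma word_perm_facelet_sticker:
  "word_perm w (facelet_sticker c) = facelet_sticker (word_facelet w c)"
  by (induction w) (simp_all add: G3_one_apply G3_mult_apply word_perm_in_G3 turn_move_in_G3
      face_move_facelet_sticker)

lemma G3_twist: "g \<in> carrier G3 \<Longrightarrow> s \<in> stickers3 \<Longrightarrow> g (twist s) = twist (g s)"
proof (induction arbitrary: s rule: G3_induct)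
  case one
  then show ?case by (simp add: G3_one_apply twist_in_stickers3)
next
  case (turn t)
  then show ?case by (rule face_move_twist)
next
  case (mult x y)
  then show ?case by (simp add: G3_mult_apply twist_in_stickers3 G3_apply_in_stickers3)
qed

lemma G3_same_cubelet:
  assumes "g \<in> carrier G3" "s \<in> stickers3" "t \<in> stickers3" "fst t = fst s"
  shows "fst (g t) = fst (g s)"
proof -
  have "t \<in> {s, twist s, twist (twist s)}" using same_cubelet_twist assms(2-4) by blast
  moreover have "g (twist s) = twist (g s)" "g (twist (twist s)) = twist (twist (g s))"
    using G3_twist[OF assms(1)] assms(2) twist_in_stickers3 by simp_all
  ultimately have "g t \<in> {g s, twist (g s), twist (twist (g s))}" by auto
  then show ?thesis by auto
qed

lemma G3_edge_iff:
  assumes "g \<in> carrier G3" "s \<in> stickers3"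
  shows "fst (g s) \<in> edge_pos \<longleftrightarrow> fst s \<in> edge_pos"
proof -
  have gs: "g s \<in> stickers3" and tts: "twist (twist s) \<in> stickers3"
    using assms G3_apply_in_stickers3 twist_in_stickers3 by blast+
  have "twist (twist (g s)) = g (twist (twist s))"
    using assms twist_in_stickers3 by (simp add: G3_twist)
  then have "twist (twist (g s)) = g s \<longleftrightarrow> twist (twist s) = s"
    using G3_inj[OF assms(1) tts assms(2)] by auto
  then show ?thesis using twist_twist_eq_iff gs assms(2) by simp
qed

lemma G3_corner_iff:
  "g \<in> carrier G3 \<Longrightarrow> s \<in> stickers3 \<Longrightarrow> fst (g s) \<in> corner_pos \<longleftrightarrow> fst s \<in> corner_pos"
  using G3_edge_iff sticker_position G3_apply_in_stickers3 by metis

lemma G3_position_class: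
  assumes "g \<in> carrier G3" "s \<in> stickers3" "P \<in> {corner_pos, edge_pos}"
  shows "fst (g s) \<in> P \<longleftrightarrow> fst s \<in> P"
  using G3_corner_iff[OF assms(1,2)] G3_edge_iff[OF assms(1,2)] assms(3) by blast

lemma G3_eq_one_if_fixes_cubelets:
  assumes g: "g \<in> carrier G3" and "orientation_preserving g"
    and fixed: "\<And>s. s \<in> stickers3 \<Longrightarrow> fst (g s) = fst s"
  shows "g = \<one>\<^bsub>G3\<^esub>"
proof (rule G3_eqI[OF g G3.one_closed])
  fix s assume s: "s \<in> stickers3"
  let ?r = "(fst s, reference_face (fst s))"
  have r: "?r \<in> stickers3"
    using s stickers3_iff reference_sticker_in_stickers3 by blast
  have "is_reference (g ?r)"
    using \<open>orientation_preserving g\<close> r by (simp add: orientation_preserving_def is_reference_def)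
  then have gr: "g ?r = ?r"
    using fixed[OF r] by (simp add: is_reference_def prod_eq_iff)
  have "s \<in> {?r, twist ?r, twist (twist ?r)}"
    using same_cubelet_twist[OF r s] by simp
  moreover have "g (twist ?r) = twist ?r" "g (twist (twist ?r)) = twist (twist ?r)"
    using G3_twist[OF g] r twist_in_stickers3 gr by simp_all
  ultimately show "g s = \<one>\<^bsub>G3\<^esub> s"
    using gr G3_one_apply[OF s] by auto
qed

lemma some_sticker_in_stickers3:
  assumes "p \<in> corner_pos \<union> edge_pos"
  shows "(p, SOME n. n \<in> axes \<and> dotv p n = 1) \<in> stickers3"
proof -
  have "reference_face p \<in> axes \<and> dotv p (reference_face p) = 1"
    using reference_sticker_in_stickers3[OF assms] stickers3_iff by simp
  then have "(SOME n. n \<in> axes \<and> dotv p n = 1) \<in> axes \<and>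
      dotv p (SOME n. n \<in> axes \<and> dotv p n = 1) = 1"
    by (rule someI)
  then show ?thesis using assms stickers3_iff by simp
qed

lemma pos_perm_apply:
  assumes "g \<in> carrier G3" "s \<in> stickers3" "fst s \<in> P"
  shows "pos_perm P g (fst s) = fst (g s)"
proof -
  have "fst s \<in> corner_pos \<union> edge_pos" using assms(2) stickers3_iff by blast
  then have "(fst s, SOME n. n \<in> axes \<and> dotv (fst s) n = 1) \<in> stickers3"
    by (rule some_sticker_in_stickers3)
  then show ?thesis
    using G3_same_cubelet[OF assms(1,2)] assms(3) by (simp add: pos_perm_def)
qed

lemma pos_perm_outside: "p \<notin> P \<Longrightarrow> pos_perm P g p = p"
  by (simp add: pos_perm_def)

lemma pos_perm_eqI:
  assumes "g \<in> carrier G3" "P \<in> {corner_pos, edge_pos}"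
    and "\<And>s. s \<in> stickers3 \<Longrightarrow> fst s \<in> P \<Longrightarrow> fst (g s) = f (fst s)" "\<And>p. p \<notin> P \<Longrightarrow> f p = p"
  shows "pos_perm P g = f"
proof
  fix p show "pos_perm P g p = f p"
  proof (cases "p \<in> P")
    case True
    then have r: "(p, reference_face p) \<in> stickers3"
      using assms(2) reference_sticker_in_stickers3[of p] by blast
    have "pos_perm P g p = fst (g (p, reference_face p))"
      using pos_perm_apply[OF assms(1) r] True by simp
    also have "\<dots> = f p" using assms(3)[OF r] True by simp
    finally show ?thesis .
  qed (simp add: pos_perm_outside assms(4))
qed

lemma pos_perm_mult:
  assumes "x \<in> carrier G3" "y \<in> carrier G3" "P \<in> {corner_pos, edge_pos}"
  shows "pos_perm P (x \<otimes>\<^bsub>G3\<^esub> y) = pos_perm P x \<circ> pos_perm P y"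
proof (rule pos_perm_eqI[OF G3.m_closed[OF assms(1,2)] assms(3)])
  fix s assume s: "s \<in> stickers3" "fst s \<in> P"
  then have ys: "y s \<in> stickers3" "fst (y s) \<in> P"
    using G3_apply_in_stickers3 G3_position_class assms by auto
  show "fst ((x \<otimes>\<^bsub>G3\<^esub> y) s) = (pos_perm P x \<circ> pos_perm P y) (fst s)"
    using pos_perm_apply[OF assms(2) s] pos_perm_apply[OF assms(1) ys]
    by (simp add: G3_mult_apply assms s)
qed (simp add: pos_perm_outside)

lemma pos_perm_one: "P \<in> {corner_pos, edge_pos} \<Longrightarrow> pos_perm P \<one>\<^bsub>G3\<^esub> = id"
  by (rule pos_perm_eqI) (simp_all add: G3_one_apply)

lemma phi_psi: "phi (psi g) = pos_perm corner_pos g"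
proof
  fix p show "phi (psi g) p = pos_perm corner_pos g p"
  proof (cases "p \<in> corner_pos")
    case True
    then have "(p, SOME n. n \<in> axes \<and> dotv p n = 1) \<in> stickers2"
      using some_sticker_in_stickers3[of p] by (simp add: stickers2_def stickers3_def)
    then show ?thesis using True by (simp add: phi_def pos_perm_def psi_def)
  qed (simp add: phi_def pos_perm_def)
qed

lemma alpha_mult:
  "x \<in> carrier G3 \<Longrightarrow> y \<in> carrier G3 \<Longrightarrow>
    alpha (x \<otimes>\<^bsub>G3\<^esub> y) = (beta x \<circ> beta y, phi (psi x) \<circ> phi (psi y))"
  by (simp add: alpha_def beta_def phi_psi pos_perm_mult)

lemma alpha_one: "alpha \<one>\<^bsub>G3\<^esub> = (id, id)"
  by (simp add: alpha_def beta_def phi_psi pos_perm_one)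

lemma alpha_fixes_cubelets:
  assumes "g \<in> carrier G3" "alpha g = (id, id)" "s \<in> stickers3"
  shows "fst (g s) = fst s"
proof (cases "fst s \<in> corner_pos")
  case True
  then show ?thesis
    using pos_perm_apply[OF assms(1,3) True] assms(2) by (simp add: alpha_def phi_psi)
next
  case False
  then have "fst s \<in> edge_pos" using assms(3) sticker_position by blast
  then show ?thesis
    using pos_perm_apply[OF assms(1,3) \<open>fst s \<in> edge_pos\<close>] assms(2)
    by (simp add: alpha_def beta_def)
qed

section \<open>The subgroup Q\<close>

lemma sigma_comp:
  assumes "p permutes corner_pos" "q permutes corner_pos"
  shows "sigma (p \<circ> q) = sigma p \<circ> sigma q"
proof -
  have "finite corner_pos" by (simp add: corner_pos_eq)
  then have "permutation p" "permutation q"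
    using assms permutation_permutes by blast+
  then show ?thesis by (auto simp: sigma_def evenperm_comp)
qed

lemma S_set_comp: "(a, p) \<in> S_set \<Longrightarrow> (b, q) \<in> S_set \<Longrightarrow> (a \<circ> b, p \<circ> q) \<in> S_set"
  by (auto simp: S_set_def sigma_comp permutes_compose)

lemma id_in_S_set: "(id, id) \<in> S_set"
  by (auto simp: S_set_def sigma_def evenperm_id)

lemma transposition_in_S_set:
  "a \<in> corner_pos \<Longrightarrow> b \<in> corner_pos \<Longrightarrow> a \<noteq> b \<Longrightarrow>
    (transpose edge_b edge_c, transpose a b) \<in> S_set"
  by (auto simp: S_set_def sigma_def evenperm_swap permutes_swap_id)

definition Q_grp :: "(sticker \<Rightarrow> sticker) set" where
  "Q_grp = {g \<in> carrier G3. orientation_preserving g \<and> alpha g \<in> S_set}"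

lemma subgroup_Q_grp: "subgroup Q_grp G3"
proof (rule G3.finite_subgroupI[OF finite_carrier_G3])
  show "Q_grp \<subseteq> carrier G3" by (auto simp: Q_grp_def)
  show "\<one>\<^bsub>G3\<^esub> \<in> Q_grp"
    by (simp add: Q_grp_def orientation_preserving_def G3_one_apply alpha_one id_in_S_set)
  fix x y assume "x \<in> Q_grp" "y \<in> Q_grp"
  then have xy: "x \<in> carrier G3" "y \<in> carrier G3"
    "orientation_preserving x" "orientation_preserving y"
    and "(beta x, phi (psi x)) \<in> S_set" "(beta y, phi (psi y)) \<in> S_set"
    by (auto simp: Q_grp_def alpha_def)
  then have "alpha (x \<otimes>\<^bsub>G3\<^esub> y) \<in> S_set" by (simp add: alpha_mult S_set_comp)
  moreover have "orientation_preserving (x \<otimes>\<^bsub>G3\<^esub> y)"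
    using xy by (simp add: orientation_preserving_def G3_mult_apply G3_apply_in_stickers3)
  ultimately show "x \<otimes>\<^bsub>G3\<^esub> y \<in> Q_grp" using xy by (simp add: Q_grp_def)
qed

lemma Q_grp_inter_ker_alpha: "Q_grp \<inter> ker_alpha = {\<one>\<^bsub>G3\<^esub>}"
proof
  show "Q_grp \<inter> ker_alpha \<subseteq> {\<one>\<^bsub>G3\<^esub>}"
  proof
    fix q assume "q \<in> Q_grp \<inter> ker_alpha"
    then have "q \<in> carrier G3" "orientation_preserving q" "alpha q = (id, id)"
      by (auto simp: Q_grp_def ker_alpha_def)
    then show "q \<in> {\<one>\<^bsub>G3\<^esub>}"
      using G3_eq_one_if_fixes_cubelets alpha_fixes_cubelets by blast
  qed
  show "{\<one>\<^bsub>G3\<^esub>} \<subseteq> Q_grp \<inter> ker_alpha"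
    using subgroup.one_closed[OF subgroup_Q_grp] alpha_one by (simp add: ker_alpha_def)
qed

lemma corner_swap_word_apply:
  assumes "p \<in> fst ` set swap_setups" "s \<in> stickers3"
  shows "is_reference (word_perm (corner_swap_word p) s) = is_reference s"
    and "fst (word_perm (corner_swap_word p) s) =
      transpose corner_1 p (transpose edge_b edge_c (fst s))"
  using assms(2) by (induction rule: stickers3_facelet_induct)
    (simp_all add: word_perm_facelet_sticker corner_swap_word_facelet[OF assms(1)])

lemma alpha_corner_swap:
  assumes p: "p \<in> fst ` set swap_setups"
  shows "alpha (word_perm (corner_swap_word p)) = (transpose edge_b edge_c, transpose corner_1 p)"
proof -
  have p_corner: "p \<in> corner_pos" "p \<noteq> corner_1"
    using p corner_pos_eq corner_1_notin_swap_setups by blast+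
  have corner_1: "corner_1 \<in> corner_pos" by (simp add: corner_pos_eq)
  have "beta (word_perm (corner_swap_word p)) = transpose edge_b edge_c"
    unfolding beta_def
  proof (rule pos_perm_eqI[OF word_perm_in_G3])
    fix s assume "s \<in> stickers3" "fst s \<in> edge_pos"
    moreover have "transpose edge_b edge_c (fst s) \<in> edge_pos"
      using calculation(2) edge_b_in_edge_pos edge_c_in_edge_pos by (auto simp: transpose_def)
    ultimately show "fst (word_perm (corner_swap_word p) s) = transpose edge_b edge_c (fst s)"
      using corner_swap_word_apply(2)[OF p] p_corner corner_1 corner_edge_disjoint
      by (auto simp: transpose_def)
  qed (use edge_b_in_edge_pos edge_c_in_edge_pos in \<open>auto simp: transpose_def\<close>)
  moreover have "pos_perm corner_pos (word_perm (corner_swap_word p)) = transpose corner_1 p"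
  proof (rule pos_perm_eqI[OF word_perm_in_G3])
    fix s assume "s \<in> stickers3" "fst s \<in> corner_pos"
    then show "fst (word_perm (corner_swap_word p) s) = transpose corner_1 p (fst s)"
      using corner_swap_word_apply(2)[OF p] edge_b_in_edge_pos edge_c_in_edge_pos
        corner_edge_disjoint
      by (auto simp: transpose_def)
  qed (use p_corner corner_1 in \<open>auto simp: transpose_def\<close>)
  ultimately show ?thesis by (simp add: alpha_def phi_psi)
qed

lemma corner_swap_in_Q_grp:
  assumes p: "p \<in> fst ` set swap_setups"
  shows "word_perm (corner_swap_word p) \<in> Q_grp"
proof -
  have "p \<in> corner_pos" "p \<noteq> corner_1" "corner_1 \<in> corner_pos"
    using p corner_pos_eq corner_1_notin_swap_setups by blast+
  then show ?thesis
    using corner_swap_word_apply(1)[OF p] alpha_corner_swap[OF p] transposition_in_S_set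
    by (simp add: Q_grp_def word_perm_in_G3 orientation_preserving_def)
qed

lemma corner_perms_of_Q_grp:
  assumes "\<pi> permutes corner_pos"
  shows "\<pi> \<in> (\<lambda>q. phi (psi q)) ` Q_grp"
proof (rule permutes_in_closure_of_transpositions[where a = corner_1])
  show "finite corner_pos" by (simp add: corner_pos_eq)
  have "phi (psi \<one>\<^bsub>G3\<^esub>) = id" using alpha_one by (simp add: alpha_def)
  then show "id \<in> (\<lambda>q. phi (psi q)) ` Q_grp"
    using subgroup.one_closed[OF subgroup_Q_grp] by (metis image_eqI)
  show "f \<circ> g \<in> (\<lambda>q. phi (psi q)) ` Q_grp"
    if fg: "f \<in> (\<lambda>q. phi (psi q)) ` Q_grp" "g \<in> (\<lambda>q. phi (psi q)) ` Q_grp" for f g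
  proof -
    obtain x y where xy: "x \<in> Q_grp" "y \<in> Q_grp" and "f = phi (psi x)" "g = phi (psi y)"
      using fg by blast
    then have "phi (psi (x \<otimes>\<^bsub>G3\<^esub> y)) = f \<circ> g"
      using alpha_mult[of x y] by (simp add: Q_grp_def alpha_def)
    moreover have "x \<otimes>\<^bsub>G3\<^esub> y \<in> Q_grp" using xy subgroup.m_closed[OF subgroup_Q_grp] by blast
    ultimately show ?thesis by (metis image_eqI)
  qed
  show "transpose corner_1 b \<in> (\<lambda>q. phi (psi q)) ` Q_grp" if "b \<in> corner_pos" "b \<noteq> corner_1" for b
  proof -
    have b: "b \<in> fst ` set swap_setups" using that corner_pos_eq by blast
    then have "phi (psi (word_perm (corner_swap_word b))) = transpose corner_1 b"
      using alpha_corner_swap by (simp add: alpha_def)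
    then show ?thesis using corner_swap_in_Q_grp[OF b] by (metis image_eqI)
  qed
qed (rule assms)

lemma alpha_Q_grp: "alpha ` Q_grp = S_set"
proof
  show "alpha ` Q_grp \<subseteq> S_set" by (auto simp: Q_grp_def)
  show "S_set \<subseteq> alpha ` Q_grp"
  proof
    fix x assume "x \<in> S_set"
    then obtain \<pi> where \<pi>: "\<pi> permutes corner_pos" "x = (sigma \<pi>, \<pi>)" by (auto simp: S_set_def)
    then obtain q where q: "q \<in> Q_grp" "phi (psi q) = \<pi>" using corner_perms_of_Q_grp by blast
    then have "alpha q = (beta q, \<pi>)" "alpha q \<in> S_set" by (simp_all add: alpha_def Q_grp_def)
    then have "alpha q = x" using \<pi>(2) by (auto simp: S_set_def)
    then show "x \<in> alpha ` Q_grp" using q(1) by blast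
  qed
qed

lemma corner_swaps_in_Q_grp:
  "set ps \<subseteq> fst ` set swap_setups \<Longrightarrow> word_perm (concat (map corner_swap_word ps)) \<in> Q_grp"
proof (induction ps)
  case Nil
  then show ?case using subgroup.one_closed[OF subgroup_Q_grp] by simp
next
  case (Cons p ps)
  then show ?case
    using corner_swap_in_Q_grp subgroup.m_closed[OF subgroup_Q_grp] by (simp add: word_perm_append)
qed

lemma swap_word_in_Q_grp: "word_perm (swap_word t) \<in> Q_grp"
proof -
  have "set (swap_corners t) \<subseteq> fst ` set swap_setups"
    by (cases t) (simp_all add: swap_setups_def)
  then show ?thesis unfolding swap_word_def by (rule corner_swaps_in_Q_grp)
qed

section \<open>The subgroup L\<close>

lemma L_grp_fixes_cubelets:
  assumes "l \<in> L_grp" "s \<in> stickers3"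
  shows "fst (l s) = fst s"
  using assms sticker_position[OF assms(2)] by (auto simp: L_grp_def)

lemma subgroup_L_grp: "subgroup L_grp G3"
proof (rule G3.finite_subgroupI[OF finite_carrier_G3])
  show "L_grp \<subseteq> carrier G3" by (auto simp: L_grp_def)
  show "\<one>\<^bsub>G3\<^esub> \<in> L_grp" by (simp add: L_grp_def G3_one_apply)
  fix x y assume x: "x \<in> L_grp" and y: "y \<in> L_grp"
  then have xy: "x \<in> carrier G3" "y \<in> carrier G3" by (auto simp: L_grp_def)
  have "y s \<in> stickers3" "fst (y s) = fst s" if "s \<in> stickers3" for s
    using that G3_apply_in_stickers3[OF xy(2)] L_grp_fixes_cubelets[OF y] by auto
  then show "x \<otimes>\<^bsub>G3\<^esub> y \<in> L_grp"
    using x y xy by (auto simp: L_grp_def G3_mult_apply)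
qed

lemma normal_L_grp: "L_grp \<lhd> G3"
  unfolding G3.normal_inv_iff
proof (intro conjI ballI subgroup_L_grp)
  fix x l assume x: "x \<in> carrier G3" and l: "l \<in> L_grp"
  let ?h = "inv\<^bsub>G3\<^esub> x"
  have lG: "l \<in> carrier G3" and h: "?h \<in> carrier G3" using l x by (auto simp: L_grp_def)
  have conj_apply: "(x \<otimes>\<^bsub>G3\<^esub> l \<otimes>\<^bsub>G3\<^esub> ?h) s = x (l (?h s))" if "s \<in> stickers3" for s
    using that x lG h by (simp add: G3_mult_apply G3_apply_in_stickers3)
  show "x \<otimes>\<^bsub>G3\<^esub> l \<otimes>\<^bsub>G3\<^esub> ?h \<in> L_grp"
    unfolding L_grp_def
  proof (intro CollectI conjI ballI impI)
    show "x \<otimes>\<^bsub>G3\<^esub> l \<otimes>\<^bsub>G3\<^esub> ?h \<in> carrier G3" using x lG h by simp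
  next
    fix s assume s: "s \<in> stickers3" "fst s \<in> edge_pos"
    then have "?h s \<in> stickers3" "fst (?h s) \<in> edge_pos"
      using G3_apply_in_stickers3[OF h] G3_edge_iff[OF h] by auto
    then show "(x \<otimes>\<^bsub>G3\<^esub> l \<otimes>\<^bsub>G3\<^esub> ?h) s = s"
      using l conj_apply s G3_inv_apply[OF x] by (simp add: L_grp_def)
  next
    fix s assume s: "s \<in> stickers3" "fst s \<in> corner_pos"
    have hs: "?h s \<in> stickers3" using G3_apply_in_stickers3[OF h s(1)] .
    have "fst (x (l (?h s))) = fst (x (?h s))"
      using G3_same_cubelet[OF x hs] G3_apply_in_stickers3[OF lG hs] L_grp_fixes_cubelets[OF l hs]
      by simp
    then show "fst ((x \<otimes>\<^bsub>G3\<^esub> l \<otimes>\<^bsub>G3\<^esub> ?h) s) = fst s"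
      using conj_apply s G3_inv_apply[OF x] by simp
  qed
qed

lemma L_grp_inter_Q_grp: "L_grp \<inter> Q_grp = {\<one>\<^bsub>G3\<^esub>}"
proof
  show "L_grp \<inter> Q_grp \<subseteq> {\<one>\<^bsub>G3\<^esub>}"
    using G3_eq_one_if_fixes_cubelets L_grp_fixes_cubelets by (auto simp: Q_grp_def)
  show "{\<one>\<^bsub>G3\<^esub>} \<subseteq> L_grp \<inter> Q_grp"
    using subgroup.one_closed[OF subgroup_L_grp] subgroup.one_closed[OF subgroup_Q_grp] by simp
qed

lemma twist_word_in_L_grp: "word_perm (twist_word t) \<in> L_grp"
  unfolding L_grp_def
proof (intro CollectI conjI ballI impI word_perm_in_G3)
  have facelet_facts: "if nonzeros (fst (facelet_sticker c)) = 3
    then fst (facelet_sticker (word_facelet (twist_word t) c)) = fst (facelet_sticker c)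
    else word_facelet (twist_word t) c = c" for c
    using turn_words_facelet[of c t] by (simp split: if_splits)
  fix s assume "s \<in> stickers3"
  then show "fst s \<in> edge_pos \<Longrightarrow> word_perm (twist_word t) s = s"
    and "fst s \<in> corner_pos \<Longrightarrow> fst (word_perm (twist_word t) s) = fst s"
    by (induction rule: stickers3_facelet_induct)
      (use facelet_facts in
        \<open>auto simp: word_perm_facelet_sticker corner_pos_def edge_pos_def split: if_splits\<close>)
qed

section \<open>The splitting\<close>

abbreviation LQ_grp :: "(sticker \<Rightarrow> sticker) set" where
  "LQ_grp \<equiv> L_grp <#>\<^bsub>G3\<^esub> Q_grp"

lemma subgroup_LQ_grp: "subgroup LQ_grp G3"
  using second_isomorphism_grp.normal_set_mult_subgroup[of L_grp G3 Q_grp]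
    normal_L_grp subgroup_Q_grp
  unfolding second_isomorphism_grp_def second_isomorphism_grp_axioms_def by blast

lemma LQ_grp_memI: "l \<in> L_grp \<Longrightarrow> q \<in> Q_grp \<Longrightarrow> l \<otimes>\<^bsub>G3\<^esub> q \<in> LQ_grp"
  unfolding set_mult_def by blast

lemma L_grp_subset_LQ_grp: "L_grp \<subseteq> LQ_grp"
proof
  fix l assume "l \<in> L_grp"
  then have "l \<otimes>\<^bsub>G3\<^esub> \<one>\<^bsub>G3\<^esub> \<in> LQ_grp"
    using LQ_grp_memI subgroup.one_closed[OF subgroup_Q_grp] by blast
  then show "l \<in> LQ_grp" using \<open>l \<in> L_grp\<close> subgroup.mem_carrier[OF subgroup_L_grp] by simp
qed

lemma normal_L_grp_LQ_grp: "L_grp \<lhd> G3\<lparr>carrier := LQ_grp\<rparr>"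
  by (rule G3.normal_restrict_supergroup[OF subgroup_LQ_grp normal_L_grp L_grp_subset_LQ_grp])

lemma psi_hom_BijGroup: "psi \<in> hom G3 (BijGroup stickers2)"
proof -
  have "(\<lambda>g. restrict g stickers2)
    \<in> hom ((BijGroup stickers3)\<lparr>carrier := carrier G3\<rparr>) (BijGroup stickers2)"
  proof (rule restrict_hom_BijGroup)
    show "carrier G3 \<subseteq> Bij stickers3" using G3_Bij by blast
    show "stickers2 \<subseteq> stickers3" by (auto simp: stickers2_eq)
    then show "finite stickers2" using finite_stickers3 finite_subset by blast
    show "g ` stickers2 \<subseteq> stickers2" if "g \<in> carrier G3" for g
      using that G3_apply_in_stickers3 G3_corner_iff by (auto simp: stickers2_eq)
  qed
  then show ?thesis using G3_eq_BijGroup_restrict by (simp add: psi_def[abs_def])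
qed

lemma psi_turn_move: "psi (turn_move t) = face_move stickers2 (turn_axis t)"
  by (auto simp: psi_def face_move_def stickers2_eq)

lemma carrier_G2: "carrier G2 = psi ` carrier G3"
proof -
  interpret psi: group_hom G3 "BijGroup stickers2" psi
    by (intro group_hom.intro group_hom_axioms.intro G3.is_group group_BijGroup psi_hom_BijGroup)
  have "moves stickers2 = psi ` range turn_move"
    by (simp add: moves_eq_range image_image psi_turn_move)
  then have "carrier G2 = psi ` carrier (subgroup_generated G3 (range turn_move))"
    using psi.subgroup_generated_by_image[of "range turn_move"] turn_move_in_G3
    by (simp add: G2_def image_subset_iff)
  also have "carrier (subgroup_generated G3 (range turn_move)) = carrier G3"
    using generate_G3 turn_move_in_G3
    by (simp add: carrier_subgroup_generated Int_absorb1 image_subset_iff)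
  finally show ?thesis .
qed

lemma psi_hom: "psi \<in> hom G3 G2"
proof -
  have "psi ` carrier G3 \<subseteq> carrier G2" using carrier_G2 by simp
  then show ?thesis
    using psi_hom_BijGroup hom_into_subgroup_eq_gen[OF group_BijGroup] unfolding G2_def by blast
qed

lemma group_G2: "group G2"
  by (simp add: G2_def group_BijGroup group.group_subgroup_generated)

interpretation psi: group_hom G3 G2 psi
  by (intro group_hom.intro group_hom_axioms.intro G3.is_group group_G2 psi_hom)

lemma Q_grp_eq_one_if_corner_perm_id:
  assumes "q \<in> Q_grp" "phi (psi q) = id"
  shows "q = \<one>\<^bsub>G3\<^esub>"
proof -
  have "q \<in> carrier G3" "alpha q = (id, id)"
    using assms by (auto simp: Q_grp_def S_set_def alpha_def sigma_def)
  then have "q \<in> Q_grp \<inter> ker_alpha" using assms(1) by (simp add: ker_alpha_def)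
  then show ?thesis using Q_grp_inter_ker_alpha by blast
qed

lemma L_grp_eq_one_if_psi_eq_one:
  assumes l: "l \<in> L_grp" and "psi l = \<one>\<^bsub>G2\<^esub>"
  shows "l = \<one>\<^bsub>G3\<^esub>"
proof (rule G3_eqI[OF _ G3.one_closed])
  show lG: "l \<in> carrier G3" using l by (simp add: L_grp_def)
  fix s assume s: "s \<in> stickers3"
  show "l s = \<one>\<^bsub>G3\<^esub> s"
  proof (cases "fst s \<in> corner_pos")
    case True
    then have "s \<in> stickers2" using s stickers2_eq by blast
    moreover have "psi l s = psi \<one>\<^bsub>G3\<^esub> s" using assms(2) by simp
    ultimately show ?thesis by (simp add: psi_def)
  next
    case False
    then show ?thesis using l s sticker_position G3_one_apply by (auto simp: L_grp_def)
  qed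
qed

lemma LQ_grp_eq_one_if_psi_eq_one:
  assumes "x \<in> LQ_grp" "psi x = \<one>\<^bsub>G2\<^esub>"
  shows "x = \<one>\<^bsub>G3\<^esub>"
proof -
  obtain l q where l: "l \<in> L_grp" and q: "q \<in> Q_grp" and x: "x = l \<otimes>\<^bsub>G3\<^esub> q"
    using assms(1) unfolding set_mult_def by blast
  have lG: "l \<in> carrier G3" and qG: "q \<in> carrier G3" using l q by (auto simp: L_grp_def Q_grp_def)
  have "phi (psi x) = id" using assms(2) alpha_one by (simp add: alpha_def flip: psi.hom_one)
  moreover have "phi (psi l) = id"
    using pos_perm_eqI[OF lG, of corner_pos id] L_grp_fixes_cubelets[OF l] by (simp add: phi_psi)
  ultimately have "phi (psi q) = id" using alpha_mult[OF lG qG] x by (simp add: alpha_def)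
  then have "x = l" using Q_grp_eq_one_if_corner_perm_id[OF q] x lG by simp
  then show ?thesis using L_grp_eq_one_if_psi_eq_one l assms(2) by simp
qed

lemma group_LQ_grp: "group (G3\<lparr>carrier := LQ_grp\<rparr>)"
  by (rule subgroup.subgroup_is_group[OF subgroup_LQ_grp G3.is_group])

lemma psi_hom_LQ_grp: "psi \<in> hom (G3\<lparr>carrier := LQ_grp\<rparr>) G2"
proof (rule homI)
  fix x assume "x \<in> carrier (G3\<lparr>carrier := LQ_grp\<rparr>)"
  then show "psi x \<in> carrier G2" using subgroup.subset[OF subgroup_LQ_grp] by auto
next
  fix x y assume "x \<in> carrier (G3\<lparr>carrier := LQ_grp\<rparr>)" "y \<in> carrier (G3\<lparr>carrier := LQ_grp\<rparr>)"
  then have "x \<in> carrier G3" "y \<in> carrier G3"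
    using subgroup.subset[OF subgroup_LQ_grp] by auto
  then show "psi (x \<otimes>\<^bsub>G3\<lparr>carrier := LQ_grp\<rparr>\<^esub> y) = psi x \<otimes>\<^bsub>G2\<^esub> psi y" by simp
qed

lemma inj_on_psi_LQ_grp: "inj_on psi LQ_grp"
proof -
  interpret psi_LQ: group_hom "G3\<lparr>carrier := LQ_grp\<rparr>" G2 psi
    by (intro group_hom.intro group_hom_axioms.intro group_LQ_grp group_G2 psi_hom_LQ_grp)
  have "kernel (G3\<lparr>carrier := LQ_grp\<rparr>) G2 psi = {\<one>\<^bsub>G3\<^esub>}"
  proof
    show "kernel (G3\<lparr>carrier := LQ_grp\<rparr>) G2 psi \<subseteq> {\<one>\<^bsub>G3\<^esub>}"
      using LQ_grp_eq_one_if_psi_eq_one by (auto simp: kernel_def)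
    show "{\<one>\<^bsub>G3\<^esub>} \<subseteq> kernel (G3\<lparr>carrier := LQ_grp\<rparr>) G2 psi"
      using subgroup.one_closed[OF subgroup_LQ_grp] by (simp add: kernel_def)
  qed
  then show ?thesis using psi_LQ.inj_iff_trivial_ker by simp
qed

lemma psi_turn_move_in_image: "psi (turn_move t) \<in> psi ` LQ_grp"
proof -
  let ?z = "word_perm (twist_word t) \<otimes>\<^bsub>G3\<^esub> word_perm (swap_word t)"
  have "?z \<in> LQ_grp" using LQ_grp_memI twist_word_in_L_grp swap_word_in_Q_grp by blast
  moreover have "?z s = turn_move t s" if "s \<in> stickers2" for s
  proof -
    have "s \<in> stickers3" "fst s \<in> corner_pos" using that stickers2_eq by auto
    then show ?thesis
    proof (induction rule: stickers3_facelet_induct)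
      case (facelet c)
      then have "word_facelet (twist_word t @ swap_word t) c = turn_facelet t c"
        using turn_words_facelet[of c t] by (simp add: corner_pos_def)
      then show ?case
        by (simp flip: word_perm_append add: word_perm_facelet_sticker face_move_facelet_sticker)
    qed
  qed
  then have "psi ?z = psi (turn_move t)" by (auto simp: psi_def)
  ultimately show ?thesis by (metis image_eqI)
qed

lemma psi_image_LQ_grp: "psi ` LQ_grp = carrier G2"
proof
  show "psi ` LQ_grp \<subseteq> carrier G2"
    unfolding carrier_G2 by (rule image_mono[OF subgroup.subset[OF subgroup_LQ_grp]])
  have "psi g \<in> psi ` LQ_grp" if "g \<in> carrier G3" for g
    using that
  proof (induction rule: G3_induct)
    case one
    show ?case using subgroup.one_closed[OF subgroup_LQ_grp] by (rule imageI)
  next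
    case (turn t)
    show ?case by (rule psi_turn_move_in_image)
  next
    case (mult x y)
    obtain x' where x': "psi x = psi x'" "x' \<in> LQ_grp" using mult.IH(1) by (rule imageE)
    obtain y' where y': "psi y = psi y'" "y' \<in> LQ_grp" using mult.IH(2) by (rule imageE)
    have "x' \<in> carrier G3" "y' \<in> carrier G3"
      using x'(2) y'(2) subgroup.subset[OF subgroup_LQ_grp] by auto
    then have "psi (x \<otimes>\<^bsub>G3\<^esub> y) = psi (x' \<otimes>\<^bsub>G3\<^esub> y')"
      using mult.hyps x'(1) y'(1) by simp
    moreover have "x' \<otimes>\<^bsub>G3\<^esub> y' \<in> LQ_grp"
      using x'(2) y'(2) by (rule subgroup.m_closed[OF subgroup_LQ_grp])
    ultimately show ?case by (rule image_eqI)
  qed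
  then show "carrier G2 \<subseteq> psi ` LQ_grp"
    unfolding carrier_G2 by (rule image_subsetI)
qed

lemma psi_iso_LQ_grp: "psi \<in> iso (G3\<lparr>carrier := LQ_grp\<rparr>) G2"
  using psi_hom_LQ_grp inj_on_psi_LQ_grp psi_image_LQ_grp by (simp add: iso_def bij_betw_def)

theorem theorem3p10:
  shows "(\<exists>Q. subgroup Q G3 \<and> Q \<inter> ker_alpha = {\<one>\<^bsub>G3\<^esub>} \<and> alpha ` Q = S_set \<and>
            subgroup (L_grp <#>\<^bsub>G3\<^esub> Q) G3 \<and>
            L_grp \<lhd> G3\<lparr>carrier := L_grp <#>\<^bsub>G3\<^esub> Q\<rparr> \<and>
            L_grp \<inter> Q = {\<one>\<^bsub>G3\<^esub>} \<and>
            psi \<in> iso (G3\<lparr>carrier := L_grp <#>\<^bsub>G3\<^esub> Q\<rparr>) G2)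
       \<and> (\<exists>s. s \<in> hom G2 G3 \<and> (\<forall>x \<in> carrier G2. psi (s x) = x))
       \<and> (\<exists>K. subgroup K G3 \<and> G2 \<cong> G3\<lparr>carrier := K\<rparr>)"
proof -
  let ?s = "inv_into LQ_grp psi"
  have inv_iso: "?s \<in> iso G2 (G3\<lparr>carrier := LQ_grp\<rparr>)"
    using group.iso_set_sym[OF group_LQ_grp psi_iso_LQ_grp] by simp
  then have "?s \<in> hom G2 G3"
    using subgroup.subset[OF subgroup_LQ_grp] by (auto simp: iso_def hom_def Pi_iff)
  moreover have "\<forall>x \<in> carrier G2. psi (?s x) = x"
    using psi_image_LQ_grp f_inv_into_f by metis
  moreover have "G2 \<cong> G3\<lparr>carrier := LQ_grp\<rparr>"
    using inv_iso by (rule is_isoI)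
  ultimately show ?thesis
    using subgroup_Q_grp Q_grp_inter_ker_alpha alpha_Q_grp subgroup_LQ_grp normal_L_grp_LQ_grp
      L_grp_inter_Q_grp psi_iso_LQ_grp by blast
qed

end
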